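(* Let $p\in[1,\infty)$ and $\zeta\in M_p^{n-1}$. If $u_k,u\in\mathrm{Conv}_{\mathrm{coe}}^{(n)}(\mathbb{R}^n)$ are such that $\delta_{\zeta,p}(u_k,u)\to 0$, then $u_k(x_0)\to u(x_0)$ as $k\to\infty$ for every $x_0\in\mathrm{int}\,\mathrm{dom}\,u$.
   Context: $\mathrm{Conv}_{\mathrm{coe}}^{(n)}(\mathbb{R}^n)$ is the set of proper, lower semicontinuous, convex, coercive $u:\mathbb{R}^n\to\mathbb{R}\cup\{+\infty\}$ with $\mathrm{dom}\,u=\{u<+\infty\}$ of dimension $n$. $M_p^{n-1}$ is the set of continuous, strictly decreasing $\zeta:\mathbb{R}\to(0,\infty)$ with $\int_0^\infty\zeta(t)^pt^{n-1}dt<\infty$. $\delta_{\zeta,p}(u,v)=\left(\int_{\mathbb{R}^n}|\zeta(u(x))-\zeta(v(x))|^pdx\right)^{1/p}$ with $\zeta(+\infty):=0$. *)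

theory Defs
  imports "HOL-Analysis.Analysis"
begin

text \<open>Functions R^n -> R \<union> {+\<infinity>} are modelled as maps into ereal never taking the value -\<infinity>;
  the dimension n is DIM('a) for a Euclidean space 'a.\<close>

definition edom :: "('a \<Rightarrow> ereal) \<Rightarrow> 'a set" where
  "edom u = {x. u x < \<infinity>}"

definition proper_fun :: "('a \<Rightarrow> ereal) \<Rightarrow> bool" where
  "proper_fun u \<longleftrightarrow> (\<forall>x. u x \<noteq> -\<infinity>) \<and> (\<exists>x. u x < \<infinity>)"

definition lsc_fun :: "('a::topological_space \<Rightarrow> ereal) \<Rightarrow> bool" where
  "lsc_fun u \<longleftrightarrow> (\<forall>x. u x \<le> Liminf (at x) u)"

definition convex_efun :: "('a::real_vector \<Rightarrow> ereal) \<Rightarrow> bool" where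
  "convex_efun u \<longleftrightarrow> (\<forall>x y t. 0 \<le> t \<and> t \<le> 1 \<longrightarrow>
      u ((1 - t) *\<^sub>R x + t *\<^sub>R y) \<le> ereal (1 - t) * u x + ereal t * u y)"

definition coercive_fun :: "('a::real_normed_vector \<Rightarrow> ereal) \<Rightarrow> bool" where
  "coercive_fun u \<longleftrightarrow> filterlim u at_top at_infinity"

definition Conv_coe_n :: "('a::euclidean_space \<Rightarrow> ereal) set" where
  "Conv_coe_n = {u. proper_fun u \<and> lsc_fun u \<and> convex_efun u \<and> coercive_fun u
                    \<and> aff_dim (edom u) = int DIM('a)}"

definition M_p :: "real \<Rightarrow> nat \<Rightarrow> (real \<Rightarrow> real) set" where
  "M_p p m = {\<zeta>. continuous_on UNIV \<zeta> \<and> (\<forall>t. 0 < \<zeta> t)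
                  \<and> (\<forall>s t. s < t \<longrightarrow> \<zeta> t < \<zeta> s)
                  \<and> (\<integral>\<^sup>+ t. ennreal (indicator {0..} t * (\<zeta> t powr p * t ^ m)) \<partial>lborel) < \<infinity>}"

text \<open>\<zeta> extended by \<zeta>(+\<infinity>) = 0 (value at -\<infinity> irrelevant, set to 0).\<close>
definition zeta_ext :: "(real \<Rightarrow> real) \<Rightarrow> ereal \<Rightarrow> real" where
  "zeta_ext \<zeta> a = (case a of ereal t \<Rightarrow> \<zeta> t | _ \<Rightarrow> 0)"

definition delta_zeta :: "(real \<Rightarrow> real) \<Rightarrow> real \<Rightarrow> ('a::euclidean_space \<Rightarrow> ereal) \<Rightarrow> ('a \<Rightarrow> ereal) \<Rightarrow> ennreal" where
  "delta_zeta \<zeta> p u v =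
     (let I = (\<integral>\<^sup>+ x. ennreal (\<bar>zeta_ext \<zeta> (u x) - zeta_ext \<zeta> (v x)\<bar> powr p) \<partial>lborel)
      in if I = \<infinity> then \<infinity> else ennreal (enn2real I powr (1 / p)))"

end

theory Submission
  imports Defs
begin

(* Write a = u x0. Since x0 is an interior point of the domain of the convex function u, u is
   continuous there and stays within a small fraction of \<epsilon> of a on a ball B around x0.
   If v x0 \<ge> a + \<epsilon>, then for every y \<in> B the points y and 2 x0 - y average to x0, so by
   convexity of v one of them lies in {v > a + \<epsilon>/2}; this set therefore fills half of B.
   If v x0 \<le> a - \<epsilon>, then every z in the half ball B' is the midpoint of x0 and 2 z - x0, so
   either v z \<le> a - \<epsilon>/4 or 2 z - x0 lies in {v > a + \<epsilon>/2}; as z \<mapsto> 2 z - x0 expands volume,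
   these two sets together fill half of B'. On each of these sets \<zeta> o v and \<zeta> o u are
   separated by a fixed gap because \<zeta> is strictly decreasing, so the integral of
   |\<zeta> o v - \<zeta> o u|^p is bounded below by some m(\<epsilon>) > 0 independent of v, and
   \<delta>(uk k, u) \<longrightarrow> 0 forces |uk k x0 - a| < \<epsilon> eventually. *)

lemma lsc_fun_open_superlevel:
  fixes u :: "'a::topological_space \<Rightarrow> ereal"
  assumes "lsc_fun u"
  shows "open {x. c < u x}"
  unfolding open_subopen[of "{x. c < u x}"]
proof (intro ballI)
  fix x assume x: "x \<in> {x. c < u x}"
  then have "c < Liminf (at x) u"
    using assms unfolding lsc_fun_def by (meson less_le_trans mem_Collect_eq)
  then have "eventually (\<lambda>y. c < u y) (at x)"
    by (rule less_LiminfD)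
  then obtain S where "open S" "x \<in> S" "\<forall>y\<in>S. y \<noteq> x \<longrightarrow> c < u y"
    unfolding eventually_at_topological by blast
  with x show "\<exists>T. open T \<and> x \<in> T \<and> T \<subseteq> {x. c < u x}"
    by (intro exI[of _ S]) auto
qed

lemma lsc_fun_closed_sublevel:
  fixes u :: "'a::topological_space \<Rightarrow> ereal"
  assumes "lsc_fun u"
  shows "closed {x. u x \<le> c}"
proof -
  have "{x. u x \<le> c} = - {x. c < u x}"
    by auto
  then show ?thesis
    using lsc_fun_open_superlevel[OF assms] by (simp add: closed_def)
qed

lemma lsc_fun_level_sets_borel:
  assumes "lsc_fun u"
  shows "{x. c < u x} \<in> sets borel" "{x. u x \<le> c} \<in> sets borel"
  using lsc_fun_open_superlevel[OF assms] lsc_fun_closed_sublevel[OF assms] by auto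

lemma convex_efun_midpoint_le:
  assumes "convex_efun u" "u x \<le> ereal A" "u y \<le> ereal B"
  shows "u (midpoint x y) \<le> ereal ((A + B) / 2)"
proof -
  have "u (midpoint x y) = u ((1 - 1/2) *\<^sub>R x + (1/2) *\<^sub>R y)"
    by (simp add: midpoint_def scaleR_add_right)
  also have "\<dots> \<le> ereal (1 - 1/2) * u x + ereal (1/2) * u y"
    by (rule assms(1)[unfolded convex_efun_def, rule_format]) simp
  also have "\<dots> \<le> ereal (1 - 1/2) * ereal A + ereal (1/2) * ereal B"
    by (intro add_mono ereal_mult_left_mono assms(2,3)) auto
  also have "\<dots> = ereal ((A + B) / 2)"
    by (simp add: field_simps)
  finally show ?thesis .
qed

lemma proper_fun_finite_on_edom:
  assumes "proper_fun u" "x \<in> edom u"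
  shows "u x = ereal (real_of_ereal (u x))"
  using assms unfolding proper_fun_def edom_def by (cases "u x") auto

lemma convex_efun_le_combination:
  assumes "proper_fun u" "convex_efun u" "x \<in> edom u" "y \<in> edom u" "0 \<le> t" "t \<le> 1"
  shows "u ((1 - t) *\<^sub>R x + t *\<^sub>R y)
           \<le> ereal ((1 - t) * real_of_ereal (u x) + t * real_of_ereal (u y))"
proof -
  have "u ((1 - t) *\<^sub>R x + t *\<^sub>R y) \<le> ereal (1 - t) * u x + ereal t * u y"
    using assms(2,5,6) unfolding convex_efun_def by blast
  also have "\<dots> = ereal ((1 - t) * real_of_ereal (u x) + t * real_of_ereal (u y))"
    by (subst (1 2) proper_fun_finite_on_edom[OF assms(1)]) (use assms(3,4) in simp_all)
  finally show ?thesis .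
qed

lemma convex_edom:
  assumes "proper_fun u" "convex_efun u"
  shows "convex (edom u)"
proof (rule convexI)
  fix x y and a b :: real
  assume xy: "x \<in> edom u" "y \<in> edom u" and ab: "0 \<le> a" "0 \<le> b" "a + b = 1"
  have "u ((1 - b) *\<^sub>R x + b *\<^sub>R y)
          \<le> ereal ((1 - b) * real_of_ereal (u x) + b * real_of_ereal (u y))"
    by (rule convex_efun_le_combination[OF assms xy]) (use ab in auto)
  then have "u ((1 - b) *\<^sub>R x + b *\<^sub>R y) < \<infinity>"
    by (rule le_less_trans) simp
  moreover have "a = 1 - b"
    using ab by simp
  ultimately show "a *\<^sub>R x + b *\<^sub>R y \<in> edom u"
    unfolding edom_def by simp
qed

lemma convex_on_real_of_efun:
  fixes u :: "'a::real_normed_vector \<Rightarrow> ereal"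
  assumes "proper_fun u" "convex_efun u"
  shows "convex_on (interior (edom u)) (\<lambda>x. real_of_ereal (u x))"
proof (rule convex_onI)
  show "convex (interior (edom u))"
    by (rule convex_interior[OF convex_edom[OF assms]])
  fix x y and t :: real
  assume "x \<in> interior (edom u)" "y \<in> interior (edom u)" and t: "0 < t" "t < 1"
  then have xy: "x \<in> edom u" "y \<in> edom u"
    using interior_subset by auto
  define z where "z = (1 - t) *\<^sub>R x + t *\<^sub>R y"
  have "z \<in> edom u"
    using convex_edom[OF assms] xy t unfolding convex_alt z_def by simp
  then have "u z = ereal (real_of_ereal (u z))"
    by (rule proper_fun_finite_on_edom[OF assms(1)])
  moreover have "u z \<le> ereal ((1 - t) * real_of_ereal (u x) + t * real_of_ereal (u y))"
    unfolding z_def by (rule convex_efun_le_combination[OF assms xy]) (use t in auto)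
  ultimately have "real_of_ereal (u z) \<le> (1 - t) * real_of_ereal (u x) + t * real_of_ereal (u y)"
    by (metis ereal_less_eq(3))
  then show "real_of_ereal (u ((1 - t) *\<^sub>R x + t *\<^sub>R y))
               \<le> (1 - t) * real_of_ereal (u x) + t * real_of_ereal (u y)"
    unfolding z_def .
qed

lemma convex_efun_near_interior_point:
  fixes u :: "'a::euclidean_space \<Rightarrow> ereal"
  assumes "proper_fun u" "convex_efun u" "x0 \<in> interior (edom u)" "0 < e"
  obtains a r where "u x0 = ereal a" "0 < r"
    "\<And>y. y \<in> ball x0 r \<Longrightarrow> ereal (a - e) \<le> u y \<and> u y \<le> ereal (a + e)"
proof -
  have ua: "u x0 = ereal (real_of_ereal (u x0))"
    using proper_fun_finite_on_edom[OF assms(1)] assms(3) interior_subset by blast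
  have "continuous_on (interior (edom u)) (\<lambda>x. real_of_ereal (u x))"
    by (rule convex_on_continuous[OF open_interior convex_on_real_of_efun[OF assms(1,2)]])
  then obtain d where d: "0 < d" "\<And>y. y \<in> interior (edom u) \<Longrightarrow> dist y x0 < d \<Longrightarrow>
      dist (real_of_ereal (u y)) (real_of_ereal (u x0)) < e"
    using assms(3,4) unfolding continuous_on_iff by blast
  obtain r0 where r0: "0 < r0" "ball x0 r0 \<subseteq> interior (edom u)"
    using assms(3) open_interior open_contains_ball by blast
  show ?thesis
  proof (rule that[OF ua])
    show "0 < min d r0"
      using d r0 by simp
    fix y assume "y \<in> ball x0 (min d r0)"
    then have y: "y \<in> interior (edom u)" "dist y x0 < d"
      using r0 by (auto simp: dist_commute)
    then have "\<bar>real_of_ereal (u y) - real_of_ereal (u x0)\<bar> < e"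
      using d(2) by (simp add: dist_real_def)
    moreover obtain ry where "u y = ereal ry"
      using proper_fun_finite_on_edom[OF assms(1)] y(1) interior_subset by blast
    ultimately show "ereal (real_of_ereal (u x0) - e) \<le> u y \<and> u y \<le> ereal (real_of_ereal (u x0) + e)"
      by (simp add: abs_less_iff)
  qed
qed

lemma emeasure_lborel_vimage_affine_le:
  fixes A :: "'a::euclidean_space set"
  assumes "1 \<le> \<bar>c\<bar>" "A \<in> sets borel"
  shows "emeasure lborel ((\<lambda>x. t + c *\<^sub>R x) -` A) \<le> emeasure lborel A"
proof -
  have c: "c \<noteq> 0"
    using assms(1) by auto
  have "emeasure lborel A
      = emeasure (density (distr lborel borel (\<lambda>x. t + c *\<^sub>R x)) (\<lambda>_. \<bar>c\<bar> ^ DIM('a))) A"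
    using lborel_affine[OF c, of t] by simp
  also have "\<dots> = ennreal (\<bar>c\<bar> ^ DIM('a)) * emeasure lborel ((\<lambda>x. t + c *\<^sub>R x) -` A)"
    using assms(2) c by (simp add: emeasure_density_const emeasure_distr)
  finally have eq: "emeasure lborel A
      = ennreal (\<bar>c\<bar> ^ DIM('a)) * emeasure lborel ((\<lambda>x. t + c *\<^sub>R x) -` A)" .
  have "1 \<le> ennreal (\<bar>c\<bar> ^ DIM('a))"
    using assms(1) by (simp add: one_le_power ennreal_1[symmetric] del: ennreal_1)
  then show ?thesis
    unfolding eq by (metis mult_1 mult_right_mono zero_le)
qed

lemma emeasure_lborel_le_affine_cover:
  fixes B S T :: "'a::euclidean_space set"
  assumes "1 \<le> \<bar>c\<bar>" "S \<in> sets borel" "T \<in> sets borel"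
    and "B \<subseteq> S \<union> (\<lambda>x. t + c *\<^sub>R x) -` T"
  shows "emeasure lborel B \<le> emeasure lborel S + emeasure lborel T"
proof -
  have T': "(\<lambda>x. t + c *\<^sub>R x) -` T \<in> sets borel"
    by (rule measurable_sets_borel[OF _ assms(3)]) simp
  have "emeasure lborel B \<le> emeasure lborel (S \<union> (\<lambda>x. t + c *\<^sub>R x) -` T)"
    using assms(2,4) T' by (intro emeasure_mono) auto
  also have "\<dots> \<le> emeasure lborel S + emeasure lborel ((\<lambda>x. t + c *\<^sub>R x) -` T)"
    using assms(2) T' by (intro emeasure_subadditive) auto
  also have "\<dots> \<le> emeasure lborel S + emeasure lborel T"
    using emeasure_lborel_vimage_affine_le[OF assms(1,3)] by (rule add_left_mono)
  finally show ?thesis .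
qed

lemma emeasure_ball_le_superlevel:
  fixes v :: "'a::euclidean_space \<Rightarrow> ereal"
  assumes "lsc_fun v" "convex_efun v" "ereal c < v x0"
  shows "emeasure lborel (ball x0 r) \<le> 2 * emeasure lborel (ball x0 r \<inter> {x. ereal c < v x})"
proof -
  define S where "S = ball x0 r \<inter> {x. ereal c < v x}"
  have S: "S \<in> sets borel"
    unfolding S_def using lsc_fun_level_sets_borel[OF assms(1)] by (auto intro!: sets.Int)
  have "ball x0 r \<subseteq> S \<union> (\<lambda>x. 2 *\<^sub>R x0 + (-1) *\<^sub>R x) -` S"
  proof
    fix y assume y: "y \<in> ball x0 r"
    have "dist x0 (2 *\<^sub>R x0 + (-1) *\<^sub>R y) = dist x0 y"
      unfolding dist_norm scaleR_2 by (simp add: norm_minus_commute)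
    with y have "2 *\<^sub>R x0 + (-1) *\<^sub>R y \<in> ball x0 r"
      by simp
    moreover have "midpoint y (2 *\<^sub>R x0 + (-1) *\<^sub>R y) = x0"
      by (simp add: midpoint_eq_iff scaleR_2)
    ultimately show "y \<in> S \<union> (\<lambda>x. 2 *\<^sub>R x0 + (-1) *\<^sub>R x) -` S"
      using y assms(3) convex_efun_midpoint_le[OF assms(2), of y c "2 *\<^sub>R x0 + (-1) *\<^sub>R y" c]
      unfolding S_def by (force simp: add_divide_distrib)
  qed
  then show ?thesis
    using emeasure_lborel_le_affine_cover[of "-1" S S _ "2 *\<^sub>R x0"] S unfolding S_def
    by (simp add: mult_2)
qed

lemma emeasure_half_ball_le_sublevel_superlevel:
  fixes v :: "'a::euclidean_space \<Rightarrow> ereal"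
  assumes "lsc_fun v" "convex_efun v" "v x0 \<le> ereal b"
  shows "emeasure lborel (ball x0 (r/2)) \<le> 2 * emeasure lborel
           ((ball x0 (r/2) \<inter> {x. v x \<le> ereal ((b + c) / 2)}) \<union> (ball x0 r \<inter> {x. ereal c < v x}))"
proof -
  define Low where "Low = ball x0 (r/2) \<inter> {x. v x \<le> ereal ((b + c) / 2)}"
  define High where "High = ball x0 r \<inter> {x. ereal c < v x}"
  have Low: "Low \<in> sets borel" and High: "High \<in> sets borel"
    unfolding Low_def High_def using lsc_fun_level_sets_borel[OF assms(1)] by (auto intro!: sets.Int)
  have "ball x0 (r/2) \<subseteq> Low \<union> (\<lambda>x. (- x0) + 2 *\<^sub>R x) -` High"
  proof
    fix z assume z: "z \<in> ball x0 (r/2)"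
    have "x0 - (- x0 + 2 *\<^sub>R z) = 2 *\<^sub>R (x0 - z)"
      by (simp add: algebra_simps scaleR_2)
    then have "dist x0 (- x0 + 2 *\<^sub>R z) = 2 * dist x0 z"
      by (simp add: dist_norm)
    with z have "- x0 + 2 *\<^sub>R z \<in> ball x0 r"
      by simp
    moreover have "midpoint x0 (- x0 + 2 *\<^sub>R z) = z"
      by (simp add: midpoint_eq_iff scaleR_2)
    ultimately show "z \<in> Low \<union> (\<lambda>x. (- x0) + 2 *\<^sub>R x) -` High"
      using z convex_efun_midpoint_le[OF assms(2,3), of "- x0 + 2 *\<^sub>R z" c]
      unfolding Low_def High_def by (force simp: not_less)
  qed
  then have "emeasure lborel (ball x0 (r/2)) \<le> emeasure lborel Low + emeasure lborel High"
    using emeasure_lborel_le_affine_cover[of 2 Low High _ "- x0"] Low High by simp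
  also have "\<dots> \<le> 2 * emeasure lborel (Low \<union> High)"
    using Low High by (simp add: mult_2 add_mono emeasure_mono)
  finally show ?thesis
    unfolding Low_def High_def .
qed

definition zeta_integral ::
    "(real \<Rightarrow> real) \<Rightarrow> real \<Rightarrow> ('a::euclidean_space \<Rightarrow> ereal) \<Rightarrow> ('a \<Rightarrow> ereal) \<Rightarrow> ennreal" where
  "zeta_integral \<zeta> p u v =
     (\<integral>\<^sup>+ x. ennreal (\<bar>zeta_ext \<zeta> (u x) - zeta_ext \<zeta> (v x)\<bar> powr p) \<partial>lborel)"

lemma delta_zeta_eq:
  "delta_zeta \<zeta> p u v = (if zeta_integral \<zeta> p u v = \<infinity> then \<infinity>
     else ennreal (enn2real (zeta_integral \<zeta> p u v) powr (1 / p)))"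
  unfolding delta_zeta_def zeta_integral_def Let_def ..

lemma zeta_integral_less_if_delta_zeta_less:
  assumes "0 < p" "0 < m" "delta_zeta \<zeta> p u v < ennreal (m powr (1 / p))"
  shows "zeta_integral \<zeta> p u v < ennreal m"
proof (rule ccontr)
  let ?I = "zeta_integral \<zeta> p u v"
  assume "\<not> ?I < ennreal m"
  moreover have fin: "?I \<noteq> \<infinity>"
    using assms(3) by (auto simp: delta_zeta_eq split: if_splits)
  ultimately have "m \<le> enn2real ?I"
    by (simp add: not_less ennreal_le_iff[symmetric] ennreal_enn2real_if)
  then have "m powr (1 / p) \<le> enn2real ?I powr (1 / p)"
    using assms(1,2) by (intro powr_mono2) auto
  then have "ennreal (m powr (1 / p)) \<le> delta_zeta \<zeta> p u v"
    using fin by (simp add: delta_zeta_eq ennreal_leI)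
  with assms(3) show False
    by simp
qed

lemma eventually_zeta_integral_less:
  assumes "((\<lambda>k. delta_zeta \<zeta> p (v k) u) \<longlongrightarrow> 0) F" "0 < p" "0 < m"
  shows "eventually (\<lambda>k. zeta_integral \<zeta> p (v k) u < ennreal m) F"
proof -
  have "0 < ennreal (m powr (1 / p))"
    using assms(3) by simp
  with assms(1) have "eventually (\<lambda>k. delta_zeta \<zeta> p (v k) u < ennreal (m powr (1 / p))) F"
    by (rule order_tendstoD(2))
  then show ?thesis
    by eventually_elim (rule zeta_integral_less_if_delta_zeta_less[OF assms(2,3)])
qed

lemma zeta_integral_ge_measure:
  assumes "S \<in> sets lborel" "0 \<le> \<eta>" "0 < p"
    and "\<And>x. x \<in> S \<Longrightarrow> \<eta> \<le> \<bar>zeta_ext \<zeta> (u x) - zeta_ext \<zeta> (v x)\<bar>"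
  shows "ennreal (\<eta> powr p) * emeasure lborel S \<le> zeta_integral \<zeta> p u v"
proof -
  have "ennreal (\<eta> powr p) * emeasure lborel S = (\<integral>\<^sup>+ x. ennreal (\<eta> powr p) * indicator S x \<partial>lborel)"
    using assms(1) by (simp add: nn_integral_cmult_indicator)
  also have "\<dots> \<le> zeta_integral \<zeta> p u v"
    unfolding zeta_integral_def
  proof (rule nn_integral_mono)
    fix x
    show "ennreal (\<eta> powr p) * indicator S x
            \<le> ennreal (\<bar>zeta_ext \<zeta> (u x) - zeta_ext \<zeta> (v x)\<bar> powr p)"
    proof (cases "x \<in> S")
      case True
      then have "\<eta> powr p \<le> \<bar>zeta_ext \<zeta> (u x) - zeta_ext \<zeta> (v x)\<bar> powr p"
        using assms by (intro powr_mono2) auto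
      with True show ?thesis
        by (simp add: ennreal_leI)
    qed simp
  qed
  finally show ?thesis .
qed

lemma zeta_integral_ge_half_measure:
  assumes "S \<in> sets lborel" "emeasure lborel B < \<infinity>" "emeasure lborel B \<le> 2 * emeasure lborel S"
    and "0 \<le> \<eta>" "0 < p"
    and "\<And>x. x \<in> S \<Longrightarrow> \<eta> \<le> \<bar>zeta_ext \<zeta> (u x) - zeta_ext \<zeta> (v x)\<bar>"
  shows "ennreal (\<eta> powr p * measure lborel B / 2) \<le> zeta_integral \<zeta> p u v"
proof -
  have "2 * ennreal (\<eta> powr p * measure lborel B / 2) = ennreal (2 * (\<eta> powr p * measure lborel B / 2))"
    by (subst ennreal_mult') simp_all
  also have "\<dots> = ennreal (\<eta> powr p) * emeasure lborel B"
    using assms(2) by (simp add: emeasure_eq_ennreal_measure ennreal_mult'[symmetric])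
  also have "\<dots> \<le> ennreal (\<eta> powr p) * (2 * emeasure lborel S)"
    using assms(3) by (rule mult_left_mono) simp
  also have "\<dots> \<le> 2 * zeta_integral \<zeta> p u v"
    using zeta_integral_ge_measure[OF assms(1,4,5,6)]
    by (simp add: mult.left_commute mult_left_mono)
  finally show ?thesis
    by (simp add: ennreal_mult_le_mult_iff)
qed

lemma zeta_ext_antimono:
  assumes "\<And>s t. s < t \<Longrightarrow> \<zeta> t < \<zeta> s" "\<And>t. 0 < \<zeta> t" "w \<le> w'" "w \<noteq> -\<infinity>"
  shows "zeta_ext \<zeta> w' \<le> zeta_ext \<zeta> w"
proof (cases w)
  case (real s)
  with assms show ?thesis
    unfolding zeta_ext_def by (cases w') (auto intro: less_imp_le simp: order.order_iff_strict)
qed (use assms in auto)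

lemma zeta_ext_gap:
  assumes "\<And>s t. s < t \<Longrightarrow> \<zeta> t < \<zeta> s" "\<And>t. 0 < \<zeta> t"
    and "w' \<le> ereal s" "w' \<noteq> -\<infinity>" "ereal t \<le> w"
  shows "\<zeta> s - \<zeta> t \<le> \<bar>zeta_ext \<zeta> w - zeta_ext \<zeta> w'\<bar>"
proof -
  have "\<zeta> s \<le> zeta_ext \<zeta> w'"
    using zeta_ext_antimono[OF assms(1,2,3,4)] by (simp add: zeta_ext_def)
  moreover have "zeta_ext \<zeta> w \<le> \<zeta> t"
    using zeta_ext_antimono[OF assms(1,2,5)] by (simp add: zeta_ext_def)
  ultimately show ?thesis
    by linarith
qed

lemma zeta_integral_uniformly_pos_above:
  fixes u :: "'a::euclidean_space \<Rightarrow> ereal"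
  assumes \<zeta>: "\<And>s t. s < t \<Longrightarrow> \<zeta> t < \<zeta> s" "\<And>t. 0 < \<zeta> t" and "0 < p"
    and u: "proper_fun u" "convex_efun u" "x0 \<in> interior (edom u)" and "0 < \<epsilon>"
  obtains m where "0 < m"
    "\<And>v. lsc_fun v \<Longrightarrow> convex_efun v \<Longrightarrow> u x0 + ereal \<epsilon> \<le> v x0 \<Longrightarrow>
       ennreal m \<le> zeta_integral \<zeta> p v u"
proof -
  obtain a r where ua: "u x0 = ereal a" and r: "0 < r"
    "\<And>y. y \<in> ball x0 r \<Longrightarrow> ereal (a - \<epsilon>/4) \<le> u y \<and> u y \<le> ereal (a + \<epsilon>/4)"
    using convex_efun_near_interior_point[OF u, of "\<epsilon>/4"] \<open>0 < \<epsilon>\<close>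
    by (metis zero_less_divide_iff zero_less_numeral)
  define \<eta> where "\<eta> = \<zeta> (a + \<epsilon>/4) - \<zeta> (a + \<epsilon>/2)"
  have "0 < \<eta>"
    unfolding \<eta>_def using \<zeta>(1)[of "a + \<epsilon>/4" "a + \<epsilon>/2"] \<open>0 < \<epsilon>\<close> by simp
  show ?thesis
  proof
    show "0 < \<eta> powr p * measure lborel (ball x0 r) / 2"
      using \<open>0 < \<eta>\<close> r(1) by simp
    fix v assume v: "lsc_fun v" "convex_efun v" and "u x0 + ereal \<epsilon> \<le> v x0"
    then have "ereal (a + \<epsilon>/2) < v x0"
      using \<open>0 < \<epsilon>\<close> unfolding ua by (cases "v x0") auto
    define S where "S = ball x0 r \<inter> {x. ereal (a + \<epsilon>/2) < v x}"
    have cover: "emeasure lborel (ball x0 r) \<le> 2 * emeasure lborel S"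
      unfolding S_def by (rule emeasure_ball_le_superlevel[OF v \<open>ereal (a + \<epsilon>/2) < v x0\<close>])
    show "ennreal (\<eta> powr p * measure lborel (ball x0 r) / 2) \<le> zeta_integral \<zeta> p v u"
    proof (rule zeta_integral_ge_half_measure[OF _ emeasure_lborel_ball_finite cover _ \<open>0 < p\<close>])
      show "S \<in> sets lborel" "0 \<le> \<eta>"
        unfolding S_def using lsc_fun_level_sets_borel[OF v(1)] \<open>0 < \<eta>\<close> by (auto intro!: sets.Int)
      fix x assume "x \<in> S"
      then have "x \<in> ball x0 r" "ereal (a + \<epsilon>/2) \<le> v x"
        unfolding S_def by auto
      moreover from this(1) have "u x \<le> ereal (a + \<epsilon>/4)"
        using r(2) unfolding ua by simp
      moreover have "u x \<noteq> -\<infinity>"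
        using u(1) unfolding proper_fun_def by simp
      ultimately show "\<eta> \<le> \<bar>zeta_ext \<zeta> (v x) - zeta_ext \<zeta> (u x)\<bar>"
        unfolding \<eta>_def by (intro zeta_ext_gap[OF \<zeta>])
    qed
  qed
qed

lemma zeta_integral_uniformly_pos_below:
  fixes u :: "'a::euclidean_space \<Rightarrow> ereal"
  assumes \<zeta>: "\<And>s t. s < t \<Longrightarrow> \<zeta> t < \<zeta> s" "\<And>t. 0 < \<zeta> t" and "0 < p"
    and u: "proper_fun u" "convex_efun u" "x0 \<in> interior (edom u)" and "0 < \<epsilon>"
  obtains m where "0 < m"
    "\<And>v. proper_fun v \<Longrightarrow> lsc_fun v \<Longrightarrow> convex_efun v \<Longrightarrow> v x0 + ereal \<epsilon> \<le> u x0 \<Longrightarrow>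
       ennreal m \<le> zeta_integral \<zeta> p v u"
proof -
  obtain a r where ua: "u x0 = ereal a" and r: "0 < r"
    "\<And>y. y \<in> ball x0 r \<Longrightarrow> ereal (a - \<epsilon>/8) \<le> u y \<and> u y \<le> ereal (a + \<epsilon>/8)"
    using convex_efun_near_interior_point[OF u, of "\<epsilon>/8"] \<open>0 < \<epsilon>\<close>
    by (metis zero_less_divide_iff zero_less_numeral)
  define \<eta> where "\<eta> = min (\<zeta> (a + \<epsilon>/8) - \<zeta> (a + \<epsilon>/2)) (\<zeta> (a - \<epsilon>/4) - \<zeta> (a - \<epsilon>/8))"
  have "0 < \<eta>"
    unfolding \<eta>_def using \<zeta>(1)[of "a + \<epsilon>/8" "a + \<epsilon>/2"] \<zeta>(1)[of "a - \<epsilon>/4" "a - \<epsilon>/8"] \<open>0 < \<epsilon>\<close>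
    by simp
  show ?thesis
  proof
    show "0 < \<eta> powr p * measure lborel (ball x0 (r/2)) / 2"
      using \<open>0 < \<eta>\<close> r(1) by simp
    fix v assume v: "proper_fun v" "lsc_fun v" "convex_efun v" and "v x0 + ereal \<epsilon> \<le> u x0"
    then have "v x0 \<le> ereal (a - \<epsilon>)"
      unfolding ua by (cases "v x0") auto
    define S where "S = (ball x0 (r/2) \<inter> {x. v x \<le> ereal (a - \<epsilon>/4)}) \<union>
                        (ball x0 r \<inter> {x. ereal (a + \<epsilon>/2) < v x})"
    have mid: "(a - \<epsilon> + (a + \<epsilon>/2)) / 2 = a - \<epsilon>/4"
      by simp
    have cover: "emeasure lborel (ball x0 (r/2)) \<le> 2 * emeasure lborel S"
      using emeasure_half_ball_le_sublevel_superlevel[OF v(2,3) \<open>v x0 \<le> ereal (a - \<epsilon>)\<close>, of r "a + \<epsilon>/2"]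
      unfolding S_def mid .
    show "ennreal (\<eta> powr p * measure lborel (ball x0 (r/2)) / 2) \<le> zeta_integral \<zeta> p v u"
    proof (rule zeta_integral_ge_half_measure[OF _ emeasure_lborel_ball_finite cover _ \<open>0 < p\<close>])
      show "S \<in> sets lborel" "0 \<le> \<eta>"
        unfolding S_def using lsc_fun_level_sets_borel[OF v(2)] \<open>0 < \<eta>\<close> by (auto intro!: sets.Un sets.Int)
      fix x assume x: "x \<in> S"
      have "ball x0 (r/2) \<subseteq> ball x0 r"
        by (rule subset_ball) (use r(1) in simp)
      with x have "x \<in> ball x0 r"
        unfolding S_def by blast
      then have ux: "ereal (a - \<epsilon>/8) \<le> u x" "u x \<le> ereal (a + \<epsilon>/8)"
        using r(2) unfolding ua by simp_all
      have "u x \<noteq> -\<infinity>" "v x \<noteq> -\<infinity>"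
        using u(1) v(1) unfolding proper_fun_def by simp_all
      show "\<eta> \<le> \<bar>zeta_ext \<zeta> (v x) - zeta_ext \<zeta> (u x)\<bar>"
      proof (cases "ereal (a + \<epsilon>/2) < v x")
        case True
        then have "\<zeta> (a + \<epsilon>/8) - \<zeta> (a + \<epsilon>/2) \<le> \<bar>zeta_ext \<zeta> (v x) - zeta_ext \<zeta> (u x)\<bar>"
          using ux(2) \<open>u x \<noteq> -\<infinity>\<close> by (intro zeta_ext_gap[OF \<zeta>]) simp_all
        then show ?thesis
          unfolding \<eta>_def by linarith
      next
        case False
        with x have "v x \<le> ereal (a - \<epsilon>/4)"
          unfolding S_def by auto
        then have "\<zeta> (a - \<epsilon>/4) - \<zeta> (a - \<epsilon>/8) \<le> \<bar>zeta_ext \<zeta> (u x) - zeta_ext \<zeta> (v x)\<bar>"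
          using ux(1) \<open>v x \<noteq> -\<infinity>\<close> by (intro zeta_ext_gap[OF \<zeta>])
        then show ?thesis
          unfolding \<eta>_def by (simp add: abs_minus_commute)
      qed
    qed
  qed
qed

lemma zeta_integral_small_imp_near:
  fixes u :: "'a::euclidean_space \<Rightarrow> ereal"
  assumes \<zeta>: "\<And>s t. s < t \<Longrightarrow> \<zeta> t < \<zeta> s" "\<And>t. 0 < \<zeta> t" and p: "0 < p"
    and u: "proper_fun u" "convex_efun u" "x0 \<in> interior (edom u)" "u x0 = ereal a" and "0 < \<epsilon>"
  obtains m where "0 < m"
    "\<And>v. proper_fun v \<Longrightarrow> lsc_fun v \<Longrightarrow> convex_efun v \<Longrightarrow> zeta_integral \<zeta> p v u < ennreal m \<Longrightarrow>
       ereal (a - \<epsilon>) < v x0 \<and> v x0 < ereal (a + \<epsilon>)"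
proof -
  obtain m1 where m1: "0 < m1" "\<And>v. lsc_fun v \<Longrightarrow> convex_efun v \<Longrightarrow> u x0 + ereal \<epsilon> \<le> v x0 \<Longrightarrow>
      ennreal m1 \<le> zeta_integral \<zeta> p v u"
    using zeta_integral_uniformly_pos_above[where \<zeta> = \<zeta>, OF \<zeta> p u(1-3) \<open>0 < \<epsilon>\<close>] by metis
  obtain m2 where m2: "0 < m2" "\<And>v. proper_fun v \<Longrightarrow> lsc_fun v \<Longrightarrow> convex_efun v \<Longrightarrow>
      v x0 + ereal \<epsilon> \<le> u x0 \<Longrightarrow> ennreal m2 \<le> zeta_integral \<zeta> p v u"
    using zeta_integral_uniformly_pos_below[where \<zeta> = \<zeta>, OF \<zeta> p u(1-3) \<open>0 < \<epsilon>\<close>] by metis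
  show ?thesis
  proof
    show "0 < min m1 m2"
      using m1(1) m2(1) by simp
    fix v assume v: "proper_fun v" "lsc_fun v" "convex_efun v"
      and small: "zeta_integral \<zeta> p v u < ennreal (min m1 m2)"
    have "zeta_integral \<zeta> p v u < ennreal m1" "zeta_integral \<zeta> p v u < ennreal m2"
      by (rule less_le_trans[OF small], simp add: ennreal_leI)+
    then have "\<not> u x0 + ereal \<epsilon> \<le> v x0" "\<not> v x0 + ereal \<epsilon> \<le> u x0"
      using m1(2)[OF v(2,3)] m2(2)[OF v] by (auto simp: not_le[symmetric])
    then show "ereal (a - \<epsilon>) < v x0 \<and> v x0 < ereal (a + \<epsilon>)"
      unfolding u(4) by (cases "v x0") auto
  qed
qed

lemma tendsto_ereal_if_eventually_near:
  assumes "\<And>\<epsilon>. 0 < \<epsilon> \<Longrightarrow> eventually (\<lambda>k. ereal (a - \<epsilon>) < f k \<and> f k < ereal (a + \<epsilon>)) F"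
  shows "(f \<longlongrightarrow> ereal a) F"
proof (rule order_tendstoI)
  fix y assume "y < ereal a"
  then obtain \<epsilon> where "0 < \<epsilon>" "y \<le> ereal (a - \<epsilon>)"
  proof (cases y)
    case (real b)
    with \<open>y < ereal a\<close> show ?thesis
      using that[of "a - b"] by simp
  qed (use \<open>y < ereal a\<close> that[of 1] in simp_all)
  from assms[OF \<open>0 < \<epsilon>\<close>] show "eventually (\<lambda>k. y < f k) F"
    by eventually_elim (use \<open>y \<le> ereal (a - \<epsilon>)\<close> in \<open>blast intro: le_less_trans\<close>)
next
  fix y assume "ereal a < y"
  then obtain \<epsilon> where "0 < \<epsilon>" "ereal (a + \<epsilon>) \<le> y"
  proof (cases y)
    case (real b)
    with \<open>ereal a < y\<close> show ?thesis
      using that[of "b - a"] by simp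
  qed (use \<open>ereal a < y\<close> that[of 1] in simp_all)
  from assms[OF \<open>0 < \<epsilon>\<close>] show "eventually (\<lambda>k. f k < y) F"
    by eventually_elim (use \<open>ereal (a + \<epsilon>) \<le> y\<close> in \<open>blast intro: less_le_trans\<close>)
qed

lemma Conv_coe_nD:
  assumes "u \<in> Conv_coe_n"
  shows "proper_fun u" "lsc_fun u" "convex_efun u"
  using assms unfolding Conv_coe_n_def by auto

lemma M_pD:
  assumes "\<zeta> \<in> M_p p m"
  shows "s < t \<Longrightarrow> \<zeta> t < \<zeta> s" "0 < \<zeta> t"
  using assms unfolding M_p_def by auto

theorem lemma3p8:
  fixes p :: real and \<zeta> :: "real \<Rightarrow> real"
    and uk :: "nat \<Rightarrow> 'a::euclidean_space \<Rightarrow> ereal" and u :: "'a \<Rightarrow> ereal" and x0 :: 'a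
  assumes "1 \<le> p"
    and "\<zeta> \<in> M_p p (DIM('a) - 1)"
    and "\<And>k. uk k \<in> Conv_coe_n"
    and "u \<in> Conv_coe_n"
    and "(\<lambda>k. delta_zeta \<zeta> p (uk k) u) \<longlonglongrightarrow> 0"
    and "x0 \<in> interior (edom u)"
  shows "(\<lambda>k. uk k x0) \<longlonglongrightarrow> u x0"
proof -
  have p: "0 < p"
    using assms(1) by simp
  note \<zeta> = M_pD[OF assms(2)] and u = Conv_coe_nD[OF assms(4)] and uk = Conv_coe_nD[OF assms(3)]
  obtain a where ua: "u x0 = ereal a"
    using proper_fun_finite_on_edom[OF u(1)] assms(6) interior_subset by blast
  show ?thesis
    unfolding ua
  proof (rule tendsto_ereal_if_eventually_near)
    fix \<epsilon> :: real assume "0 < \<epsilon>"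
    obtain m where m: "0 < m" "\<And>v. proper_fun v \<Longrightarrow> lsc_fun v \<Longrightarrow> convex_efun v \<Longrightarrow>
        zeta_integral \<zeta> p v u < ennreal m \<Longrightarrow> ereal (a - \<epsilon>) < v x0 \<and> v x0 < ereal (a + \<epsilon>)"
      using zeta_integral_small_imp_near[where \<zeta> = \<zeta>, OF \<zeta> p u(1,3) assms(6) ua \<open>0 < \<epsilon>\<close>] by metis
    from eventually_zeta_integral_less[OF assms(5) p m(1)]
    show "eventually (\<lambda>k. ereal (a - \<epsilon>) < uk k x0 \<and> uk k x0 < ereal (a + \<epsilon>)) sequentially"
      by eventually_elim (rule m(2)[OF uk])
  qed
qed

end
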